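(* Let $N$ be a prime, and for each $r\in\mathbb{Z}$ with $2\le|r|<\frac12N$, let $\gamma_{r,1}\in\Gamma_0(N)$ be a matrix with top row $\begin{pmatrix} r&-1\end{pmatrix}$. Then any matrix $\begin{pmatrix} A & B \\ CN & D \end{pmatrix} \in \Gamma_0(N)$ (with $A,B,C,D\in\mathbb{Z}$) may be written in the form $\pm\tau_1\tau_2\cdots\tau_l$ with $\tau_i\in\{T,T^{-1},W,W^{-1},\gamma_{r,1}^{-1}:2\le|r|<\frac12N\}$ for each $i=1,\ldots,l$, in such a way that $$\#\{i:\tau_i\in\{\gamma_{r,1}^{-1}\}\}\le\log_2(|A|).$$
   Context: Here $T=\begin{pmatrix}1&1\\0&1\end{pmatrix}$, $W=\begin{pmatrix}1&0\\N&1\end{pmatrix}$, and $\Gamma_0(N)$ is the usual Hecke congruence subgroup of $\mathrm{SL}_2(\mathbb{Z})$ consisting of matrices with lower-left entry divisible by $N$. *)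

theory Defs
  imports Complex_Main "HOL-Computational_Algebra.Primes"
begin

text \<open>2x2 integer matrices (a b; c d) represented as tuples (a, b, c, d).\<close>
type_synonym mat2 = "int \<times> int \<times> int \<times> int"

fun m2mult :: "mat2 \<Rightarrow> mat2 \<Rightarrow> mat2" where
  "m2mult (a, b, c, d) (e, f, g, h) = (a*e + b*g, a*f + b*h, c*e + d*g, c*f + d*h)"

definition m2id :: mat2 where "m2id = (1, 0, 0, 1)"

fun m2neg :: "mat2 \<Rightarrow> mat2" where
  "m2neg (a, b, c, d) = (-a, -b, -c, -d)"

fun m2det :: "mat2 \<Rightarrow> int" where
  "m2det (a, b, c, d) = a*d - b*c"

fun sl2inv :: "mat2 \<Rightarrow> mat2" where
  "sl2inv (a, b, c, d) = (d, -b, -c, a)"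

definition m2prod :: "mat2 list \<Rightarrow> mat2" where
  "m2prod xs = foldr m2mult xs m2id"

definition Gamma0 :: "int \<Rightarrow> mat2 set" where
  "Gamma0 N = {(a, b, c, d). a*d - b*c = 1 \<and> N dvd c}"

definition matT :: mat2 where "matT = (1, 1, 0, 1)"
definition matW :: "int \<Rightarrow> mat2" where "matW N = (1, 0, N, 1)"

fun m2topleft :: "mat2 \<Rightarrow> int" where
  "m2topleft (a, b, c, d) = a"

end

theory Submission
  imports Defs
begin

(* Descent on the top-left entry a of M = (a b; c d) in Gamma0(N).  Choose t with
   |ta - c| <= |a|/2.  If N does not divide t, write t = r - jN with 0 < |r| <= N/2;
   any X in Gamma0(N) with top row (r, -1) makes X W^j have top row (t, -1), so
   X W^j M has top-left entry ta - c and the single letter X^-1 halves |a|.  For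
   |r| = 1 (which covers N = 2) X = T^-1 or -T costs nothing, otherwise X = gamma_r.
   If N divides t, W^(-t/N) turns c into c - ta and a power of T then replaces a by
   a mod (c - ta), again without any gamma letter.  The descent stops at |a| = 1,
   where M = +-W^i T^j; hence 2^(number of gamma letters) <= |a|. *)

lemma m2mult_assoc: "m2mult (m2mult x y) z = m2mult x (m2mult y z)"
  by (cases x; cases y; cases z) (simp add: algebra_simps)

lemma m2mult_m2id_left [simp]: "m2mult m2id x = x"
  by (cases x) (simp add: m2id_def)

lemma m2mult_m2id_right [simp]: "m2mult x m2id = x"
  by (cases x) (simp add: m2id_def)

lemma sl2inv_m2mult_self: "m2mult (sl2inv g) g = (m2det g, 0, 0, m2det g)"
  by (cases g) (simp add: algebra_simps)

lemma sl2inv_cancel_left: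
  assumes "m2det g = 1"
  shows "m2mult (sl2inv g) (m2mult g x) = x"
  using assms by (simp flip: m2mult_assoc add: sl2inv_m2mult_self m2id_def [symmetric])

lemma m2mult_m2neg_left: "m2mult (m2neg x) y = m2neg (m2mult x y)"
  by (cases x; cases y) simp

lemma m2mult_m2neg_right: "m2mult x (m2neg y) = m2neg (m2mult x y)"
  by (cases x; cases y) simp

lemma m2neg_m2neg [simp]: "m2neg (m2neg x) = x"
  by (cases x) simp

lemma sl2inv_m2mult: "sl2inv (m2mult x y) = m2mult (sl2inv y) (sl2inv x)"
  by (cases x; cases y) (simp add: algebra_simps)

lemma m2det_m2mult: "m2det (m2mult x y) = m2det x * m2det y"
  by (cases x; cases y) (simp add: algebra_simps)

lemma sl2inv_sl2inv [simp]: "sl2inv (sl2inv x) = x"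
  by (cases x) simp

lemma Gamma0_iff: "(a, b, c, d) \<in> Gamma0 N \<longleftrightarrow> m2det (a, b, c, d) = 1 \<and> N dvd c"
  by (simp add: Gamma0_def)

lemma Gamma0_m2det: "x \<in> Gamma0 N \<Longrightarrow> m2det x = 1"
  by (cases x) (simp add: Gamma0_def)

lemma Gamma0_m2mult:
  assumes "x \<in> Gamma0 N" "y \<in> Gamma0 N"
  shows "m2mult x y \<in> Gamma0 N"
proof -
  obtain a b c d e f g h where xy: "x = (a, b, c, d)" "y = (e, f, g, h)"
    by (cases x; cases y)
  have "N dvd c * e + d * g"
    using assms xy by (simp add: Gamma0_def)
  moreover have "m2det (m2mult x y) = 1"
    using assms by (simp add: m2det_m2mult Gamma0_m2det)
  ultimately show ?thesis
    using xy by (simp add: Gamma0_iff)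
qed

lemma Gamma0_topleft_nonzero:
  assumes "x \<in> Gamma0 N" "\<not> is_unit N"
  shows "m2topleft x \<noteq> 0"
proof
  obtain a b c d where x: "x = (a, b, c, d)" by (cases x)
  assume "m2topleft x = 0"
  with assms x have "c * (- b) = 1" "N dvd c"
    by (auto simp: Gamma0_def mult.commute)
  then have "is_unit N"
    by (metis dvd_mult_right dvd_trans dvd_triv_left)
  with assms show False by simp
qed

definition matT_pow :: "int \<Rightarrow> mat2" where "matT_pow j = (1, j, 0, 1)"
definition matW_pow :: "int \<Rightarrow> int \<Rightarrow> mat2" where "matW_pow N j = (1, 0, j * N, 1)"

lemma matT_pow_Gamma0: "matT_pow j \<in> Gamma0 N"
  by (simp add: matT_pow_def Gamma0_def)

lemma matW_pow_Gamma0: "matW_pow N j \<in> Gamma0 N"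
  by (simp add: matW_pow_def Gamma0_def)

lemma sl2inv_matT_pow: "sl2inv (matT_pow j) = matT_pow (- j)"
  by (simp add: matT_pow_def)

lemma sl2inv_matW_pow: "sl2inv (matW_pow N j) = matW_pow N (- j)"
  by (simp add: matW_pow_def)

lemma matT_pow_succ: "matT_pow (j + 1) = m2mult matT (matT_pow j)"
  and matT_pow_pred: "matT_pow (j - 1) = m2mult (sl2inv matT) (matT_pow j)"
  by (simp_all add: matT_pow_def matT_def)

lemma matW_pow_succ: "matW_pow N (j + 1) = m2mult (matW N) (matW_pow N j)"
  and matW_pow_pred: "matW_pow N (j - 1) = m2mult (sl2inv (matW N)) (matW_pow N j)"
  by (simp_all add: matW_pow_def matW_def algebra_simps)

lemma exists_near_multiple:
  fixes a c :: int
  assumes "a \<noteq> 0"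
  shows "\<exists>t. 2 * \<bar>t * a - c\<bar> \<le> \<bar>a\<bar>"
proof -
  define q where "q = (2 * c + a) div (2 * a)"
  define m where "m = (2 * c + a) mod (2 * a)"
  have "2 * (q * a - c) = a - m"
    using div_mult_mod_eq [of "2 * c + a" "2 * a"] unfolding q_def m_def by (simp add: algebra_simps)
  moreover have "if a > 0 then 0 \<le> m \<and> m < 2 * a else 2 * a < m \<and> m \<le> 0"
    using assms unfolding m_def by simp
  ultimately show ?thesis
    by (intro exI [of _ q]) (auto split: if_splits abs_split)
qed

lemma exists_balanced_residue:
  fixes N t :: int
  assumes "N > 0" "\<not> N dvd t"
  shows "\<exists>r j. t = r - j * N \<and> r \<noteq> 0 \<and> 2 * \<bar>r\<bar> \<le> N"
proof -
  define r where "r = (if 2 * (t mod N) < N then t mod N else t mod N - N)"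
  define j where "j = (if 2 * (t mod N) < N then - (t div N) else - (t div N) - 1)"
  have "t mod N \<noteq> 0" "0 \<le> t mod N" "t mod N < N"
    using assms by (simp_all add: dvd_eq_mod_eq_0)
  then have "r \<noteq> 0 \<and> 2 * \<bar>r\<bar> \<le> N"
    unfolding r_def by auto
  moreover have "t = r - j * N"
    using div_mult_mod_eq [of t N] unfolding r_def j_def by (simp add: algebra_simps)
  ultimately show ?thesis by blast
qed

lemma small_residue_cases:
  fixes N r :: int
  assumes "prime N" "r \<noteq> 0" "2 * \<bar>r\<bar> \<le> N"
  shows "r = 1 \<or> r = -1 \<or> 2 \<le> \<bar>r\<bar> \<and> 2 * \<bar>r\<bar> < N"
proof (cases "\<bar>r\<bar> = 1")
  case False
  have "2 * \<bar>r\<bar> \<noteq> N"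
  proof
    assume N: "2 * \<bar>r\<bar> = N"
    then have "N = 2"
      using assms(1) primes_dvd_imp_eq [of 2 N] by auto
    with N False show False by simp
  qed
  with False assms(2,3) show ?thesis
    by linarith
qed linarith

lemma Gamma0_reduce_by_top_row:
  fixes j :: int
  assumes X: "X \<in> Gamma0 N" "fst X = r" "fst (snd X) = -1"
    and M: "M = (a, b, c, d)" "M \<in> Gamma0 N"
  defines "M' \<equiv> m2mult (m2mult X (matW_pow N j)) M"
  shows "M' \<in> Gamma0 N"
    and "m2topleft M' = (r - j * N) * a - c"
    and "M = m2mult (matW_pow N (- j)) (m2mult (sl2inv X) M')"
proof -
  have XW: "m2mult X (matW_pow N j) \<in> Gamma0 N"
    using X by (intro Gamma0_m2mult matW_pow_Gamma0)
  then show "M' \<in> Gamma0 N"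
    unfolding M'_def using M(2) by (rule Gamma0_m2mult)
  show "m2topleft M' = (r - j * N) * a - c"
    unfolding M'_def using X M by (cases X) (simp add: matW_pow_def algebra_simps)
  have "M = m2mult (sl2inv (m2mult X (matW_pow N j))) M'"
    unfolding M'_def using sl2inv_cancel_left [OF Gamma0_m2det [OF XW]] by simp
  then show "M = m2mult (matW_pow N (- j)) (m2mult (sl2inv X) M')"
    by (simp add: sl2inv_m2mult sl2inv_matW_pow m2mult_assoc)
qed

lemma Gamma0_reduce_by_elementary:
  assumes M: "M = (a, b, c, d)" "M \<in> Gamma0 N"
    and "\<bar>a\<bar> \<noteq> 1" "N dvd t" "2 * \<bar>t * a - c\<bar> \<le> \<bar>a\<bar>"
  shows "\<exists>i j M'. M' \<in> Gamma0 N \<and> \<bar>m2topleft M'\<bar> < \<bar>a\<bar>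
           \<and> M = m2mult (matW_pow N i) (m2mult (matT_pow j) M')"
proof -
  obtain i where t: "t = N * i"
    using \<open>N dvd t\<close> by (auto elim: dvdE)
  define c' where "c' = c - t * a"
  define M1 where "M1 = m2mult (matW_pow N (- i)) M"
  have M1: "M1 = (a, b, c', d - i * N * b)"
    using M t unfolding M1_def c'_def by (simp add: matW_pow_def algebra_simps)
  have "M1 \<in> Gamma0 N"
    unfolding M1_def using M(2) by (intro Gamma0_m2mult matW_pow_Gamma0)
  have det: "a * (d - i * N * b) - b * c' = 1"
    using \<open>M1 \<in> Gamma0 N\<close> unfolding M1 by (simp add: Gamma0_def)
  have "c' \<noteq> 0"
  proof
    assume "c' = 0"
    with det have "a * (d - i * N * b) = 1"
      by simp
    with \<open>\<bar>a\<bar> \<noteq> 1\<close> show False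
      by (auto simp: zmult_eq_1_iff)
  qed
  define M' where "M' = m2mult (matT_pow (- (a div c'))) M1"
  have "m2topleft M' = a mod c'"
    using M1 unfolding M'_def by (simp add: matT_pow_def algebra_simps minus_div_mult_eq_mod)
  moreover have "2 * \<bar>c'\<bar> \<le> \<bar>a\<bar>"
    using \<open>2 * \<bar>t * a - c\<bar> \<le> \<bar>a\<bar>\<close> unfolding c'_def by (simp add: abs_minus_commute)
  ultimately have "\<bar>m2topleft M'\<bar> < \<bar>a\<bar>"
    using abs_mod_less [OF \<open>c' \<noteq> 0\<close>, of a] abs_ge_zero [of c'] by linarith
  moreover have "M' \<in> Gamma0 N"
    unfolding M'_def using \<open>M1 \<in> Gamma0 N\<close> by (intro Gamma0_m2mult matT_pow_Gamma0)
  moreover have "M = m2mult (matW_pow N i) (m2mult (matT_pow (a div c')) M')"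
    using sl2inv_cancel_left [OF Gamma0_m2det [OF matW_pow_Gamma0], of N "- i" M]
      sl2inv_cancel_left [OF Gamma0_m2det [OF matT_pow_Gamma0], of "- (a div c')" M1]
    unfolding M'_def M1_def by (simp add: sl2inv_matW_pow sl2inv_matT_pow)
  ultimately show ?thesis by blast
qed

lemma Gamma0_topleft_unit:
  assumes "M \<in> Gamma0 N" "\<bar>m2topleft M\<bar> = 1"
  shows "\<exists>i j. M = m2mult (matW_pow N i) (matT_pow j)
             \<or> M = m2neg (m2mult (matW_pow N i) (matT_pow j))"
proof -
  obtain a b c d where M: "M = (a, b, c, d)" by (cases M)
  have det: "a * d - b * c = 1" and "N dvd c"
    using assms M by (auto simp: Gamma0_def)
  then obtain i where c: "c = i * N"
    by (metis dvdE mult.commute)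
  have "a = 1 \<or> a = -1"
    using assms M by auto
  then show ?thesis
  proof
    assume "a = 1"
    then have "M = m2mult (matW_pow N i) (matT_pow b)"
      using M c det by (simp add: matW_pow_def matT_pow_def algebra_simps)
    then show ?thesis by blast
  next
    assume "a = -1"
    then have "M = m2neg (m2mult (matW_pow N (- i)) (matT_pow (- b)))"
      using M c det by (simp add: matW_pow_def matT_pow_def algebra_simps)
    then show ?thesis by blast
  qed
qed

definition gamma_letters :: "int \<Rightarrow> (int \<Rightarrow> mat2) \<Rightarrow> mat2 set" where
  "gamma_letters N \<gamma> = {sl2inv (\<gamma> r) | r. 2 \<le> \<bar>r\<bar> \<and> 2 * \<bar>r\<bar> < N}"

definition elementary_letters :: "int \<Rightarrow> mat2 set" where
  "elementary_letters N = {matT, sl2inv matT, matW N, sl2inv (matW N)}"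

definition word_rep :: "int \<Rightarrow> (int \<Rightarrow> mat2) \<Rightarrow> mat2 \<Rightarrow> nat \<Rightarrow> bool" where
  "word_rep N \<gamma> M k \<longleftrightarrow> (\<exists>\<tau>s. set \<tau>s \<subseteq> elementary_letters N \<union> gamma_letters N \<gamma>
      \<and> (M = m2prod \<tau>s \<or> M = m2neg (m2prod \<tau>s))
      \<and> length (filter (\<lambda>\<tau>. \<tau> \<in> gamma_letters N \<gamma>) \<tau>s) \<le> k)"

lemma word_rep_m2id: "word_rep N \<gamma> m2id 0"
  unfolding word_rep_def by (intro exI [of _ "[]"]) (simp add: m2prod_def)

lemma word_rep_m2neg: "word_rep N \<gamma> M k \<Longrightarrow> word_rep N \<gamma> (m2neg M) k"
  unfolding word_rep_def by (metis m2neg_m2neg)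

lemma word_rep_Suc: "word_rep N \<gamma> M k \<Longrightarrow> word_rep N \<gamma> M (Suc k)"
  unfolding word_rep_def using le_SucI by blast

lemma word_rep_mult_letter:
  assumes "g \<in> elementary_letters N \<union> gamma_letters N \<gamma>" "word_rep N \<gamma> M k"
  shows "word_rep N \<gamma> (m2mult g M) (if g \<in> gamma_letters N \<gamma> then Suc k else k)"
proof -
  obtain \<tau>s where \<tau>s: "set \<tau>s \<subseteq> elementary_letters N \<union> gamma_letters N \<gamma>"
      "M = m2prod \<tau>s \<or> M = m2neg (m2prod \<tau>s)"
      "length (filter (\<lambda>\<tau>. \<tau> \<in> gamma_letters N \<gamma>) \<tau>s) \<le> k"
    using assms(2) unfolding word_rep_def by blast
  show ?thesis
    unfolding word_rep_def
    by (rule exI [of _ "g # \<tau>s"]) (use assms(1) \<tau>s in \<open>auto simp: m2prod_def m2mult_m2neg_right\<close>)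
qed

context
  fixes N :: int and \<gamma> :: "int \<Rightarrow> mat2"
  assumes gamma_top_row: "\<And>r. 2 \<le> \<bar>r\<bar> \<Longrightarrow> 2 * \<bar>r\<bar> < N \<Longrightarrow>
    \<gamma> r \<in> Gamma0 N \<and> fst (\<gamma> r) = r \<and> fst (snd (\<gamma> r)) = -1"
begin

lemma elementary_letter_not_gamma_letter:
  assumes "g \<in> elementary_letters N"
  shows "g \<notin> gamma_letters N \<gamma>"
proof
  assume "g \<in> gamma_letters N \<gamma>"
  then obtain r where r: "g = sl2inv (\<gamma> r)" "2 \<le> \<bar>r\<bar>" "2 * \<bar>r\<bar> < N"
    unfolding gamma_letters_def by blast
  then have "snd (snd (snd g)) = r"
    using gamma_top_row [OF r(2,3)] by (cases "\<gamma> r") simp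
  moreover have "snd (snd (snd g)) = 1"
    using assms by (auto simp: elementary_letters_def matT_def matW_def)
  ultimately show False
    using r(2) by simp
qed

lemma word_rep_mult_elementary:
  "g \<in> elementary_letters N \<Longrightarrow> word_rep N \<gamma> M k \<Longrightarrow> word_rep N \<gamma> (m2mult g M) k"
  using word_rep_mult_letter [of g N \<gamma> M k] elementary_letter_not_gamma_letter by auto

lemma word_rep_mult_matT_pow:
  assumes "word_rep N \<gamma> M k"
  shows "word_rep N \<gamma> (m2mult (matT_pow j) M) k"
proof (induction j rule: int_induct [where k = 0])
  case base
  then show ?case
    using assms by (simp add: matT_pow_def flip: m2id_def)
next
  case (step1 i)
  then show ?case
    by (simp add: matT_pow_succ m2mult_assoc word_rep_mult_elementary elementary_letters_def)
next
  case (step2 i)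
  then show ?case
    by (simp add: matT_pow_pred m2mult_assoc word_rep_mult_elementary elementary_letters_def)
qed

lemma word_rep_mult_matW_pow:
  assumes "word_rep N \<gamma> M k"
  shows "word_rep N \<gamma> (m2mult (matW_pow N j) M) k"
proof (induction j rule: int_induct [where k = 0])
  case base
  then show ?case
    using assms by (simp add: matW_pow_def flip: m2id_def)
next
  case (step1 i)
  then show ?case
    by (simp add: matW_pow_succ m2mult_assoc word_rep_mult_elementary elementary_letters_def)
next
  case (step2 i)
  then show ?case
    by (simp add: matW_pow_pred m2mult_assoc word_rep_mult_elementary elementary_letters_def)
qed

lemma top_row_letterE:
  assumes "prime N" "r \<noteq> 0" "2 * \<bar>r\<bar> \<le> N"
  obtains X where "X \<in> Gamma0 N" "fst X = r" "fst (snd X) = -1"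
    and "\<And>M k. word_rep N \<gamma> M k \<Longrightarrow> word_rep N \<gamma> (m2mult (sl2inv X) M) (Suc k)"
proof -
  consider "r = 1" | "r = -1" | "2 \<le> \<bar>r\<bar>" "2 * \<bar>r\<bar> < N"
    using small_residue_cases [OF assms] by blast
  then show ?thesis
  proof cases
    case 1
    show ?thesis
    proof (rule that [of "sl2inv matT"])
      show "sl2inv matT \<in> Gamma0 N" "fst (sl2inv matT) = r" "fst (snd (sl2inv matT)) = -1"
        using 1 by (simp_all add: matT_def Gamma0_def)
      fix M k
      assume "word_rep N \<gamma> M k"
      then show "word_rep N \<gamma> (m2mult (sl2inv (sl2inv matT)) M) (Suc k)"
        by (simp add: word_rep_Suc word_rep_mult_elementary elementary_letters_def)
    qed
  next
    case 2
    show ?thesis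
    proof (rule that [of "m2neg matT"])
      show "m2neg matT \<in> Gamma0 N" "fst (m2neg matT) = r" "fst (snd (m2neg matT)) = -1"
        using 2 by (simp_all add: matT_def Gamma0_def)
      have inverse: "sl2inv (m2neg matT) = m2neg (sl2inv matT)"
        by (simp add: matT_def)
      fix M k
      assume "word_rep N \<gamma> M k"
      then have "word_rep N \<gamma> (m2mult (sl2inv matT) M) k"
        by (simp add: word_rep_mult_elementary elementary_letters_def)
      then show "word_rep N \<gamma> (m2mult (sl2inv (m2neg matT)) M) (Suc k)"
        by (simp add: inverse m2mult_m2neg_left word_rep_m2neg word_rep_Suc)
    qed
  next
    case 3
    then have "sl2inv (\<gamma> r) \<in> gamma_letters N \<gamma>"
      unfolding gamma_letters_def by blast
    with 3 show ?thesis
      using gamma_top_row [OF 3] word_rep_mult_letter [of "sl2inv (\<gamma> r)" N \<gamma>]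
      by (intro that [of "\<gamma> r"]) auto
  qed
qed

lemma word_rep_descent_step:
  assumes "prime N" "M \<in> Gamma0 N" "\<bar>m2topleft M\<bar> \<noteq> 1"
  obtains M' e where "M' \<in> Gamma0 N" "\<bar>m2topleft M'\<bar> < \<bar>m2topleft M\<bar>"
    "2 ^ e * \<bar>m2topleft M'\<bar> \<le> \<bar>m2topleft M\<bar>"
    "\<And>k. word_rep N \<gamma> M' k \<Longrightarrow> word_rep N \<gamma> M (k + e)"
proof -
  obtain a b c d where M: "M = (a, b, c, d)"
    by (cases M)
  have "\<not> is_unit N" "N > 0"
    using assms(1) by (auto simp: prime_gt_0_int)
  then have "a \<noteq> 0"
    using Gamma0_topleft_nonzero [OF assms(2)] M by simp
  obtain t where t: "2 * \<bar>t * a - c\<bar> \<le> \<bar>a\<bar>"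
    using exists_near_multiple [OF \<open>a \<noteq> 0\<close>] by blast
  show ?thesis
  proof (cases "N dvd t")
    case True
    have "\<bar>a\<bar> \<noteq> 1"
      using assms(3) M by simp
    then obtain i j M' where M': "M' \<in> Gamma0 N" "\<bar>m2topleft M'\<bar> < \<bar>a\<bar>"
        "M = m2mult (matW_pow N i) (m2mult (matT_pow j) M')"
      using Gamma0_reduce_by_elementary [OF M assms(2) _ True t] by blast
    show ?thesis
    proof (rule that [of M' 0])
      fix k
      assume "word_rep N \<gamma> M' k"
      then show "word_rep N \<gamma> M (k + 0)"
        unfolding M'(3) by (simp add: word_rep_mult_matW_pow word_rep_mult_matT_pow)
    qed (use M M'(1,2) in simp_all)
  next
    case False
    then obtain r j where rj: "t = r - j * N" "r \<noteq> 0" "2 * \<bar>r\<bar> \<le> N"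
      using exists_balanced_residue [OF \<open>N > 0\<close>] by blast
    obtain X where X: "X \<in> Gamma0 N" "fst X = r" "fst (snd X) = -1"
        "\<And>M k. word_rep N \<gamma> M k \<Longrightarrow> word_rep N \<gamma> (m2mult (sl2inv X) M) (Suc k)"
      using top_row_letterE [OF assms(1) rj(2,3)] by blast
    define M' where "M' = m2mult (m2mult X (matW_pow N j)) M"
    note reduce = Gamma0_reduce_by_top_row [OF X(1-3) M assms(2), where j = j, folded M'_def]
    have topleft: "m2topleft M' = t * a - c"
      using reduce(2) rj(1) by simp
    have "\<bar>a\<bar> > 0"
      using \<open>a \<noteq> 0\<close> by simp
    then have "\<bar>m2topleft M'\<bar> < \<bar>a\<bar>"
      unfolding topleft using t by arith
    show ?thesis
    proof (rule that [of M' 1])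
      fix k
      assume "word_rep N \<gamma> M' k"
      then show "word_rep N \<gamma> M (k + 1)"
        by (subst reduce(3)) (simp add: word_rep_mult_matW_pow X(4))
    qed (use M reduce(1) topleft t \<open>\<bar>m2topleft M'\<bar> < \<bar>a\<bar>\<close> in simp_all)
  qed
qed

lemma word_rep_Gamma0:
  assumes "prime N"
  shows "M \<in> Gamma0 N \<Longrightarrow> \<exists>k. word_rep N \<gamma> M k \<and> 2 ^ k \<le> \<bar>m2topleft M\<bar>"
proof (induction "nat \<bar>m2topleft M\<bar>" arbitrary: M rule: less_induct)
  case less
  show ?case
  proof (cases "\<bar>m2topleft M\<bar> = 1")
    case True
    then obtain i j where
      "M = m2mult (matW_pow N i) (m2mult (matT_pow j) m2id)
       \<or> M = m2neg (m2mult (matW_pow N i) (m2mult (matT_pow j) m2id))"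
      using Gamma0_topleft_unit [OF less.prems] by auto
    then have "word_rep N \<gamma> M 0"
      using word_rep_m2neg word_rep_mult_matW_pow word_rep_mult_matT_pow word_rep_m2id by metis
    with True show ?thesis
      by auto
  next
    case False
    then obtain M' e where M': "M' \<in> Gamma0 N" "\<bar>m2topleft M'\<bar> < \<bar>m2topleft M\<bar>"
        "2 ^ e * \<bar>m2topleft M'\<bar> \<le> \<bar>m2topleft M\<bar>"
        "\<And>k. word_rep N \<gamma> M' k \<Longrightarrow> word_rep N \<gamma> M (k + e)"
      using word_rep_descent_step [OF assms less.prems] by blast
    have "nat \<bar>m2topleft M'\<bar> < nat \<bar>m2topleft M\<bar>"
      using M'(2) by simp
    then obtain k where k: "word_rep N \<gamma> M' k" "2 ^ k \<le> \<bar>m2topleft M'\<bar>"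
      using less.hyps M'(1) by blast
    have "2 ^ (k + e) \<le> 2 ^ e * \<bar>m2topleft M'\<bar>"
      using k(2) by (simp add: power_add mult.commute)
    with M'(3,4) k(1) show ?thesis
      by (intro exI [of _ "k + e"]) simp
  qed
qed

end

theorem lemma4p7:
  fixes N :: int and \<gamma> :: "int \<Rightarrow> mat2" and A B C D :: int
  assumes "prime N"
    and "\<And>r. 2 \<le> \<bar>r\<bar> \<Longrightarrow> 2 * \<bar>r\<bar> < N \<Longrightarrow>
           \<gamma> r \<in> Gamma0 N \<and> fst (\<gamma> r) = r \<and> fst (snd (\<gamma> r)) = -1"
    and "(A, B, C * N, D) \<in> Gamma0 N"
  shows "\<exists>\<tau>s :: mat2 list.
    set \<tau>s \<subseteq> {matT, sl2inv matT, matW N, sl2inv (matW N)} \<union>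
               {sl2inv (\<gamma> r) | r. 2 \<le> \<bar>r\<bar> \<and> 2 * \<bar>r\<bar> < N}
    \<and> ((A, B, C * N, D) = m2prod \<tau>s \<or> (A, B, C * N, D) = m2neg (m2prod \<tau>s))
    \<and> real (length (filter (\<lambda>t. t \<in> {sl2inv (\<gamma> r) | r. 2 \<le> \<bar>r\<bar> \<and> 2 * \<bar>r\<bar> < N}) \<tau>s))
        \<le> log 2 \<bar>A\<bar>"
proof -
  obtain k where k: "word_rep N \<gamma> (A, B, C * N, D) k" "2 ^ k \<le> \<bar>A\<bar>"
    using word_rep_Gamma0 [OF assms(2,1,3)] by auto
  then obtain \<tau>s where \<tau>s: "set \<tau>s \<subseteq> elementary_letters N \<union> gamma_letters N \<gamma>"
      "(A, B, C * N, D) = m2prod \<tau>s \<or> (A, B, C * N, D) = m2neg (m2prod \<tau>s)"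
      "length (filter (\<lambda>\<tau>. \<tau> \<in> gamma_letters N \<gamma>) \<tau>s) \<le> k"
    unfolding word_rep_def by blast
  have "(2::real) ^ k \<le> \<bar>A\<bar>"
    using k(2) by (metis of_int_le_iff of_int_numeral of_int_power)
  then have "real k \<le> log 2 \<bar>A\<bar>"
    by (intro le_log_of_power) simp_all
  with \<tau>s show ?thesis
    unfolding elementary_letters_def gamma_letters_def by force
qed

end
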